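(* Let $X$ be countable, $S$ a random variable on $X^m$, and $a\ge1$, $b\ge0$ integers with $a+b\le m$. Then $$I_S(a;b)\le a\cdot I_S(1;a+b-1),$$ where for integers $a',b'$ with $a'+b'\le m$, $I_S(a';b')=\mathbb E_{A,B}[I(S_A;S_B)]$ with $A$ a uniformly random $a'$-element subset of $[m]$ and $B$ a uniformly random $b'$-element subset of $[m]\setminus A$.
   Context: For $A\subseteq[m]$, $S_A=(S_j)_{j\in A}$. $I$ denotes mutual information; $I(S_A;S_\emptyset)=0$. *)

theory Defs
  imports "HOL-Probability.Probability"
begin

(* Standard formula  sum_x p x * ln (p x / q x)  (= \<infinity> if p x > 0 = q x).
   The summands are made nonnegative by adding  q x - p x, whose total sum is 0
   (both are probability distributions); this keeps the countable sum well defined. *)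
definition KL_pmf :: "'a pmf \<Rightarrow> 'a pmf \<Rightarrow> ennreal" where
  "KL_pmf p q = (\<integral>\<^sup>+ x. (if pmf q x = 0 \<and> pmf p x > 0 then \<infinity>
       else ennreal (pmf p x * ln (pmf p x / pmf q x) + pmf q x - pmf p x)) \<partial>count_space UNIV)"

definition mutual_info_pmf :: "('a \<times> 'b) pmf \<Rightarrow> ennreal" where
  "mutual_info_pmf P = KL_pmf P (pair_pmf (map_pmf fst P) (map_pmf snd P))"

definition sub_rv :: "nat set \<Rightarrow> (nat \<Rightarrow> 'x) \<Rightarrow> (nat \<Rightarrow> 'x)" where
  "sub_rv A s = restrict s A"

definition MI_sub :: "(nat \<Rightarrow> 'x) pmf \<Rightarrow> nat set \<Rightarrow> nat set \<Rightarrow> ennreal" where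
  "MI_sub S A B = mutual_info_pmf (map_pmf (\<lambda>s. (sub_rv A s, sub_rv B s)) S)"

definition I_S :: "(nat \<Rightarrow> 'x) pmf \<Rightarrow> nat \<Rightarrow> nat \<Rightarrow> nat \<Rightarrow> ennreal" where
  "I_S S m a b =
     (\<Sum>A\<in>{A. A \<subseteq> {1..m} \<and> card A = a}.
        (\<Sum>B\<in>{B. B \<subseteq> {1..m} - A \<and> card B = b}. MI_sub S A B))
     / of_nat ((m choose a) * ((m - a) choose b))"

end

theory Submission
  imports Defs
begin

text \<open>By the chain rule, peeling one coordinate \<open>j\<close> off \<open>A\<close> costs \<open>I(S_j; S_((A - {j}) \<union> B))\<close>, so
  \<open>I(S_A; S_B) \<le> (\<Sum>j\<in>A. I(S_j; S_(A \<union> B - {j})))\<close> by induction and monotonicity of mutual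
  information in its second argument. Averaged over \<open>A\<close> and \<open>B\<close>, each summand is the mutual
  information of a uniform singleton and a uniform \<open>(a + b - 1)\<close>-subset of the remaining
  coordinates, whence the factor \<open>a\<close>.

  Both the chain rule and the data processing inequality behind monotonicity come from one
  identity: divergences of likelihood ratios with equal products have equal sums.\<close>

definition log_gap :: "real \<Rightarrow> real" where
  "log_gap t = t - 1 - ln t"

lemma log_gap_nonneg: "t > 0 \<Longrightarrow> log_gap t \<ge> 0"
  unfolding log_gap_def using ln_le_minus_one[of t] by simp

lemma log_gap_add_eq:
  assumes "x > 0" "y > 0" "u > 0" "v > 0" and "x * y = u * v"
  shows "log_gap x + log_gap y + (u + v) = log_gap u + log_gap v + (x + y)"
proof -
  have "ln x + ln y = ln u + ln v"
    using ln_mult[of x y] ln_mult[of u v] assms by simp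
  then show ?thesis unfolding log_gap_def by simp
qed

definition pmf_expect :: "'a pmf \<Rightarrow> ('a \<Rightarrow> real) \<Rightarrow> ennreal" where
  "pmf_expect p R = (\<integral>\<^sup>+ x. ennreal (R x) \<partial>p)"

text \<open>For the likelihood ratio \<open>R = q / p\<close> this is \<open>KL(p\<parallel>q) = E\<^sub>p[- ln R]\<close>, written as a sum
  of two nonnegative terms; the second is the mass of \<open>q\<close> outside the support of \<open>p\<close>. This
  way no possibly infinite quantities are ever subtracted.\<close>

definition ratio_divergence :: "'a pmf \<Rightarrow> ('a \<Rightarrow> real) \<Rightarrow> ennreal" where
  "ratio_divergence p R = (\<integral>\<^sup>+ x. ennreal (log_gap (R x)) \<partial>p) + (1 - pmf_expect p R)"

lemma pmf_expect_map: "pmf_expect (map_pmf f p) R = pmf_expect p (R \<circ> f)"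
  by (simp add: pmf_expect_def)

lemma ratio_divergence_map: "ratio_divergence (map_pmf f p) R = ratio_divergence p (R \<circ> f)"
  by (simp add: ratio_divergence_def pmf_expect_def)

lemma pmf_expect_const_one: "pmf_expect p (\<lambda>_. 1) = 1"
  by (simp add: pmf_expect_def measure_pmf.emeasure_space_1)

lemma ratio_divergence_const_one: "ratio_divergence p (\<lambda>_. 1) = 0"
  by (simp add: ratio_divergence_def pmf_expect_const_one log_gap_def)

lemma ratio_divergence_cong:
  assumes "\<And>x. x \<in> set_pmf p \<Longrightarrow> R x = R' x"
  shows "ratio_divergence p R = ratio_divergence p R'"
proof -
  have "(\<integral>\<^sup>+ x. ennreal (log_gap (R x)) \<partial>p) = (\<integral>\<^sup>+ x. ennreal (log_gap (R' x)) \<partial>p)"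
       "pmf_expect p R = pmf_expect p R'"
    unfolding pmf_expect_def by (auto intro!: nn_integral_cong_AE simp: AE_measure_pmf_iff assms)
  then show ?thesis by (simp add: ratio_divergence_def)
qed

lemma ratio_divergence_add_expect:
  assumes "pmf_expect p R \<le> 1"
  shows "ratio_divergence p R + pmf_expect p R = (\<integral>\<^sup>+ x. ennreal (log_gap (R x)) \<partial>p) + 1"
  using assms by (simp add: ratio_divergence_def diff_add_cancel_ennreal add.assoc)

lemma ratio_divergence_add_eq:
  assumes pos: "\<And>x. x \<in> set_pmf p \<Longrightarrow> R1 x > 0 \<and> R2 x > 0 \<and> R3 x > 0 \<and> R4 x > 0"
    and prod: "\<And>x. x \<in> set_pmf p \<Longrightarrow> R1 x * R2 x = R3 x * R4 x"
    and "pmf_expect p R1 \<le> 1" "pmf_expect p R2 \<le> 1" "pmf_expect p R3 \<le> 1" "pmf_expect p R4 \<le> 1"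
  shows "ratio_divergence p R1 + ratio_divergence p R2 = ratio_divergence p R3 + ratio_divergence p R4"
proof -
  let ?G = "\<lambda>R. \<integral>\<^sup>+ x. ennreal (log_gap (R x)) \<partial>p"
  let ?E = "pmf_expect p" and ?D = "ratio_divergence p"
  have "?G R1 + ?G R2 + (?E R3 + ?E R4) =
        (\<integral>\<^sup>+ x. ennreal (log_gap (R1 x)) + ennreal (log_gap (R2 x)) + (ennreal (R3 x) + ennreal (R4 x)) \<partial>p)"
    by (simp add: nn_integral_add pmf_expect_def)
  also have "\<dots> = (\<integral>\<^sup>+ x. ennreal (log_gap (R3 x)) + ennreal (log_gap (R4 x)) + (ennreal (R1 x) + ennreal (R2 x)) \<partial>p)"
  proof (rule nn_integral_cong_AE, unfold AE_measure_pmf_iff, intro ballI)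
    fix x assume x: "x \<in> set_pmf p"
    then have "R1 x > 0" "R2 x > 0" "R3 x > 0" "R4 x > 0" using pos by auto
    then show "ennreal (log_gap (R1 x)) + ennreal (log_gap (R2 x)) + (ennreal (R3 x) + ennreal (R4 x)) =
               ennreal (log_gap (R3 x)) + ennreal (log_gap (R4 x)) + (ennreal (R1 x) + ennreal (R2 x))"
      using log_gap_add_eq[OF _ _ _ _ prod[OF x]] log_gap_nonneg
      by (simp flip: ennreal_plus add: add_nonneg_nonneg)
  qed
  also have "\<dots> = ?G R3 + ?G R4 + (?E R1 + ?E R2)"
    by (simp add: nn_integral_add pmf_expect_def)
  finally have G: "?G R1 + ?G R2 + (?E R3 + ?E R4) = ?G R3 + ?G R4 + (?E R1 + ?E R2)" .
  let ?Esum = "?E R1 + ?E R2 + ?E R3 + ?E R4"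
  have "(?D R1 + ?D R2) + ?Esum = (?D R1 + ?E R1) + (?D R2 + ?E R2) + (?E R3 + ?E R4)"
    by (simp add: ac_simps)
  also have "\<dots> = (?G R1 + ?G R2 + (?E R3 + ?E R4)) + 1 + 1"
    by (simp only: ratio_divergence_add_expect assms(3,4)) (simp add: ac_simps)
  also have "\<dots> = (?G R3 + ?G R4 + (?E R1 + ?E R2)) + 1 + 1"
    by (simp only: G)
  also have "\<dots> = (?D R3 + ?E R3) + (?D R4 + ?E R4) + (?E R1 + ?E R2)"
    by (simp only: ratio_divergence_add_expect assms(5,6)) (simp add: ac_simps)
  also have "\<dots> = (?D R3 + ?D R4) + ?Esum"
    by (simp add: ac_simps)
  finally have "?Esum + (?D R1 + ?D R2) = ?Esum + (?D R3 + ?D R4)"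
    by (simp only: add.commute)
  moreover have "?Esum \<noteq> \<top>"
    using assms(3-6) by (auto simp: ennreal_add_eq_top top_unique)
  ultimately show ?thesis
    by (simp add: ennreal_add_left_cancel)
qed

definition likelihood_ratio :: "'a pmf \<Rightarrow> 'a pmf \<Rightarrow> 'a \<Rightarrow> real" where
  "likelihood_ratio p q x = pmf q x / pmf p x"

lemma pmf_expect_likelihood_ratio:
  "pmf_expect p (likelihood_ratio p q) = emeasure (measure_pmf q) (set_pmf p)"
proof -
  have "pmf_expect p (likelihood_ratio p q)
      = (\<integral>\<^sup>+ x. ennreal (pmf q x) * indicator (set_pmf p) x \<partial>count_space UNIV)"
    unfolding pmf_expect_def nn_integral_measure_pmf likelihood_ratio_def
    by (rule nn_integral_cong) (auto simp: ennreal_mult[symmetric] set_pmf_iff indicator_def)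
  also have "\<dots> = emeasure (measure_pmf q) (set_pmf p)"
    by (simp add: nn_integral_count_space_indicator[symmetric] nn_integral_pmf)
  finally show ?thesis .
qed

lemma pmf_expect_likelihood_ratio_le_one: "pmf_expect p (likelihood_ratio p q) \<le> 1"
  unfolding pmf_expect_likelihood_ratio by (rule measure_pmf.emeasure_le_1)

lemma KL_pmf_eq_ratio_divergence:
  assumes "set_pmf p \<subseteq> set_pmf q"
  shows "KL_pmf p q = ratio_divergence p (likelihood_ratio p q)"
proof -
  have integrand: "(if pmf q x = 0 \<and> pmf p x > 0 then \<infinity>
       else ennreal (pmf p x * ln (pmf p x / pmf q x) + pmf q x - pmf p x))
     = ennreal (pmf p x) * ennreal (log_gap (likelihood_ratio p q x))
       + ennreal (pmf q x) * indicator (- set_pmf p) x" for x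
  proof (cases "x \<in> set_pmf p")
    case True
    then have p: "pmf p x > 0" and q: "pmf q x > 0"
      using assms by (auto simp: pmf_positive_iff)
    then have "pmf p x * ln (pmf p x / pmf q x) + pmf q x - pmf p x
             = pmf p x * log_gap (likelihood_ratio p q x)"
      by (simp add: likelihood_ratio_def log_gap_def ln_div field_simps)
    moreover have "log_gap (likelihood_ratio p q x) \<ge> 0"
      using p q by (intro log_gap_nonneg) (simp add: likelihood_ratio_def)
    ultimately show ?thesis
      using True p q by (simp add: ennreal_mult[symmetric])
  next
    case False
    then show ?thesis by (simp add: set_pmf_iff)
  qed
  have "emeasure (measure_pmf q) (- set_pmf p) = 1 - emeasure (measure_pmf q) (set_pmf p)"
    using emeasure_compl[of "set_pmf p" "measure_pmf q"]
    by (simp add: Compl_eq_Diff_UNIV measure_pmf.emeasure_space_1)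
  then show ?thesis
    unfolding KL_pmf_def integrand ratio_divergence_def pmf_expect_likelihood_ratio
    by (simp add: nn_integral_add nn_integral_measure_pmf nn_integral_pmf
             nn_integral_count_space_indicator[symmetric])
qed

text \<open>The \<open>p\<close>-expectation of this quotient is that of \<open>pmf p' / pmf q'\<close> under \<open>q' = map_pmf f q\<close>
  (up to the mass of \<open>q\<close> outside the support of \<open>p\<close>).\<close>

lemma pmf_expect_likelihood_ratio_quotient_le_one:
  "pmf_expect p (\<lambda>x. likelihood_ratio p q x / likelihood_ratio (map_pmf f p) (map_pmf f q) (f x)) \<le> 1"
proof -
  define p' q' where "p' = map_pmf f p" and "q' = map_pmf f q"
  have "pmf_expect p (\<lambda>x. likelihood_ratio p q x / likelihood_ratio p' q' (f x))
      \<le> pmf_expect q (likelihood_ratio q' p' \<circ> f)"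
    unfolding pmf_expect_def nn_integral_measure_pmf
  proof (rule nn_integral_mono)
    fix x
    show "ennreal (pmf p x) * ennreal (likelihood_ratio p q x / likelihood_ratio p' q' (f x))
        \<le> ennreal (pmf q x) * ennreal ((likelihood_ratio q' p' \<circ> f) x)"
    proof (cases "pmf p x = 0")
      case False
      then show ?thesis by (simp add: likelihood_ratio_def ennreal_mult[symmetric])
    qed simp
  qed
  also have "\<dots> = pmf_expect q' (likelihood_ratio q' p')"
    by (simp add: q'_def pmf_expect_map)
  also have "\<dots> \<le> 1" by (rule pmf_expect_likelihood_ratio_le_one)
  finally show ?thesis by (simp add: p'_def q'_def)
qed

lemma KL_pmf_map_le:
  assumes "set_pmf p \<subseteq> set_pmf q"
  shows "KL_pmf (map_pmf f p) (map_pmf f q) \<le> KL_pmf p q"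
proof -
  define p' q' where "p' = map_pmf f p" and "q' = map_pmf f q"
  let ?R = "likelihood_ratio p q" and ?R' = "likelihood_ratio p' q' \<circ> f"
  let ?Q = "\<lambda>x. likelihood_ratio p q x / likelihood_ratio p' q' (f x)"
  have supp': "set_pmf p' \<subseteq> set_pmf q'"
    using assms by (auto simp: p'_def q'_def)
  have "ratio_divergence p ?R + ratio_divergence p (\<lambda>_. 1)
      = ratio_divergence p ?R' + ratio_divergence p ?Q"
  proof (rule ratio_divergence_add_eq)
    fix x assume "x \<in> set_pmf p"
    then have "pmf p x > 0" "pmf q x > 0" "pmf p' (f x) > 0" "pmf q' (f x) > 0"
      using assms by (auto simp: p'_def q'_def pmf_positive)
    then show "?R x > 0 \<and> (1::real) > 0 \<and> ?R' x > 0 \<and> ?Q x > 0" and "?R x * 1 = ?R' x * ?Q x"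
      by (simp_all add: likelihood_ratio_def)
  next
    show "pmf_expect p ?R \<le> 1" "pmf_expect p (\<lambda>_. 1) \<le> 1" "pmf_expect p ?Q \<le> 1"
      by (simp_all add: p'_def q'_def pmf_expect_const_one pmf_expect_likelihood_ratio_le_one
          pmf_expect_likelihood_ratio_quotient_le_one)
    show "pmf_expect p ?R' \<le> 1"
      unfolding pmf_expect_map[symmetric] p'_def by (rule pmf_expect_likelihood_ratio_le_one)
  qed
  then have "ratio_divergence p ?R' \<le> ratio_divergence p ?R"
    by (simp add: ratio_divergence_const_one)
  then show ?thesis
    using KL_pmf_eq_ratio_divergence[OF assms] KL_pmf_eq_ratio_divergence[OF supp']
    by (simp add: p'_def q'_def ratio_divergence_map)
qed

definition marginal_product :: "('a \<times> 'b) pmf \<Rightarrow> ('a \<times> 'b) pmf" where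
  "marginal_product P = pair_pmf (map_pmf fst P) (map_pmf snd P)"

lemma set_pmf_subset_marginal_product: "set_pmf P \<subseteq> set_pmf (marginal_product P)"
  by (force simp: marginal_product_def set_pair_pmf)

lemma mutual_info_pmf_map_le:
  "mutual_info_pmf (map_pmf (map_prod f g) P) \<le> mutual_info_pmf P"
proof -
  have "marginal_product (map_pmf (map_prod f g) P) = map_pmf (map_prod f g) (marginal_product P)"
    by (simp add: marginal_product_def map_prod_def map_pair map_pmf_comp split_beta)
  then show ?thesis
    unfolding mutual_info_pmf_def marginal_product_def[symmetric]
    using KL_pmf_map_le[OF set_pmf_subset_marginal_product] by simp
qed

definition sub_prob :: "(nat \<Rightarrow> 'x) pmf \<Rightarrow> nat set \<Rightarrow> (nat \<Rightarrow> 'x) \<Rightarrow> real" where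
  "sub_prob S D s = pmf (map_pmf (sub_rv D) S) (sub_rv D s)"

definition sub_ratio :: "(nat \<Rightarrow> 'x) pmf \<Rightarrow> nat set \<Rightarrow> nat set \<Rightarrow> (nat \<Rightarrow> 'x) \<Rightarrow> real" where
  "sub_ratio S A B s = sub_prob S A s * sub_prob S B s / sub_prob S (A \<union> B) s"

lemma sub_prob_pos: "s \<in> set_pmf S \<Longrightarrow> sub_prob S D s > 0"
  unfolding sub_prob_def by (rule pmf_positive) simp

lemma sub_prob_empty: "sub_prob S {} s = 1"
  by (simp add: sub_prob_def sub_rv_def[abs_def] restrict_def)

lemma sub_rv_eq_and_eq_iff:
  "sub_rv A t = sub_rv A s \<and> sub_rv B t = sub_rv B s \<longleftrightarrow> sub_rv (A \<union> B) t = sub_rv (A \<union> B) s"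
  by (auto simp: sub_rv_def fun_eq_iff restrict_def)

lemma likelihood_ratio_sub_pair:
  fixes S :: "(nat \<Rightarrow> 'x) pmf"
  shows "likelihood_ratio (map_pmf (\<lambda>s. (sub_rv A s, sub_rv B s)) S)
           (marginal_product (map_pmf (\<lambda>s. (sub_rv A s, sub_rv B s)) S))
         \<circ> (\<lambda>s. (sub_rv A s, sub_rv B s)) = sub_ratio S A B"
proof
  fix s :: "nat \<Rightarrow> 'x"
  have "pmf (map_pmf (\<lambda>s. (sub_rv A s, sub_rv B s)) S) (sub_rv A s, sub_rv B s)
      = sub_prob S (A \<union> B) s"
    by (simp add: sub_prob_def pmf_map vimage_def sub_rv_eq_and_eq_iff)
  then show "(likelihood_ratio (map_pmf (\<lambda>s. (sub_rv A s, sub_rv B s)) S)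
           (marginal_product (map_pmf (\<lambda>s. (sub_rv A s, sub_rv B s)) S))
         \<circ> (\<lambda>s. (sub_rv A s, sub_rv B s))) s = sub_ratio S A B s"
    by (simp add: likelihood_ratio_def marginal_product_def sub_ratio_def sub_prob_def
        map_pmf_comp pmf_pair)
qed

lemma MI_sub_eq_ratio_divergence: "MI_sub S A B = ratio_divergence S (sub_ratio S A B)"
  unfolding MI_sub_def mutual_info_pmf_def marginal_product_def[symmetric]
  by (simp only: KL_pmf_eq_ratio_divergence[OF set_pmf_subset_marginal_product]
      ratio_divergence_map likelihood_ratio_sub_pair)

lemma pmf_expect_sub_ratio_le_one: "pmf_expect S (sub_ratio S A B) \<le> 1"
  using pmf_expect_likelihood_ratio_le_one[of "map_pmf (\<lambda>s. (sub_rv A s, sub_rv B s)) S"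
      "marginal_product (map_pmf (\<lambda>s. (sub_rv A s, sub_rv B s)) S)"]
  by (simp add: pmf_expect_map likelihood_ratio_sub_pair)
lemma MI_sub_insert_add_eq:
  assumes "j \<notin> A" "j \<notin> B"
  shows "MI_sub S (insert j A) B + MI_sub S A {j} = MI_sub S A B + MI_sub S {j} (A \<union> B)"
  unfolding MI_sub_eq_ratio_divergence
proof (rule ratio_divergence_add_eq)
  fix s assume s: "s \<in> set_pmf S"
  have "insert j A \<union> B = {j} \<union> (A \<union> B)" "A \<union> {j} = insert j A" by auto
  moreover have "sub_prob S D s > 0" "sub_prob S D s \<noteq> 0" for D
    using sub_prob_pos[OF s, of D] by simp_all
  ultimately show
    "sub_ratio S (insert j A) B s > 0 \<and> sub_ratio S A {j} s > 0 \<and>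
     sub_ratio S A B s > 0 \<and> sub_ratio S {j} (A \<union> B) s > 0"
    "sub_ratio S (insert j A) B s * sub_ratio S A {j} s = sub_ratio S A B s * sub_ratio S {j} (A \<union> B) s"
    by (simp_all add: sub_ratio_def field_simps)
qed (rule pmf_expect_sub_ratio_le_one)+

lemma sub_rv_sub_rv: "C \<subseteq> C' \<Longrightarrow> sub_rv C (sub_rv C' s) = sub_rv C s"
  by (auto simp: sub_rv_def restrict_def fun_eq_iff)

lemma MI_sub_mono_right:
  assumes "C \<subseteq> C'"
  shows "MI_sub S D C \<le> MI_sub S D C'"
proof -
  have "map_pmf (\<lambda>s. (sub_rv D s, sub_rv C s)) S
      = map_pmf (map_prod id (sub_rv C)) (map_pmf (\<lambda>s. (sub_rv D s, sub_rv C' s)) S)"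
    using assms by (simp add: map_pmf_comp comp_def sub_rv_sub_rv)
  then show ?thesis
    unfolding MI_sub_def using mutual_info_pmf_map_le by simp
qed

lemma MI_sub_empty_left: "MI_sub S {} B = 0"
proof -
  have "MI_sub S {} B = ratio_divergence S (\<lambda>_. 1)"
    unfolding MI_sub_eq_ratio_divergence
  proof (rule ratio_divergence_cong)
    fix s assume "s \<in> set_pmf S"
    then show "sub_ratio S {} B s = 1"
      using sub_prob_pos[of s S B] by (simp add: sub_ratio_def sub_prob_empty)
  qed
  then show ?thesis by (simp add: ratio_divergence_const_one)
qed

lemma MI_sub_le_sum_singletons:
  assumes "finite A" "A \<inter> B = {}"
  shows "MI_sub S A B \<le> (\<Sum>j\<in>A. MI_sub S {j} (A \<union> B - {j}))"
  using assms
proof (induction A rule: finite_induct)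
  case empty
  then show ?case by (simp add: MI_sub_empty_left)
next
  case (insert j A)
  have "MI_sub S (insert j A) B \<le> MI_sub S (insert j A) B + MI_sub S A {j}"
    by simp
  also have "\<dots> = MI_sub S A B + MI_sub S {j} (A \<union> B)"
    using insert by (intro MI_sub_insert_add_eq) auto
  also have "MI_sub S A B \<le> (\<Sum>k\<in>A. MI_sub S {k} (A \<union> B - {k}))"
    using insert by auto
  also have "\<dots> \<le> (\<Sum>k\<in>A. MI_sub S {k} (insert j A \<union> B - {k}))"
    by (intro sum_mono MI_sub_mono_right) auto
  also have "A \<union> B = insert j A \<union> B - {j}"
    using insert by auto
  finally show ?case
    using insert by (simp add: add.commute)
qed

lemma sum_Sigma_Sigma:
  assumes "finite I" "\<And>i. i \<in> I \<Longrightarrow> finite (J i)" "\<And>i j. i \<in> I \<Longrightarrow> j \<in> J i \<Longrightarrow> finite (K i j)"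
  shows "(\<Sum>i\<in>I. \<Sum>j\<in>J i. \<Sum>k\<in>K i j. f i j k)
       = (\<Sum>((i, j), k)\<in>Sigma (Sigma I J) (\<lambda>(i, j). K i j). f i j k)"
proof -
  have "(\<Sum>i\<in>I. \<Sum>j\<in>J i. \<Sum>k\<in>K i j. f i j k) = (\<Sum>(i, j)\<in>Sigma I J. \<Sum>k\<in>K i j. f i j k)"
    using assms by (subst sum.Sigma) (auto simp: split_def)
  also have "\<dots> = (\<Sum>((i, j), k)\<in>Sigma (Sigma I J) (\<lambda>(i, j). K i j). f i j k)"
    using assms by (subst sum.Sigma[symmetric]) (auto simp: split_def intro!: finite_SigmaI)
  finally show ?thesis .
qed

lemma finite_subsets_with: "finite M \<Longrightarrow> finite {A. A \<subseteq> M \<and> P A}"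
  by (rule rev_finite_subset[OF finite_Collect_subsets[of M]]) auto

text \<open>Double counting: \<open>(A, B, j) \<mapsto> ({j}, A \<union> B - {j}, A - {j})\<close> is a bijection onto the triples
  \<open>(J, C, D)\<close> with \<open>D\<close> an \<open>(a - 1)\<close>-subset of \<open>C\<close>.\<close>

lemma sum_subsets_pick_element:
  fixes g :: "'a set \<Rightarrow> 'a set \<Rightarrow> 'b::comm_semiring_1"
  assumes M: "finite M" and a: "1 \<le> a"
  shows "(\<Sum>A\<in>{A. A \<subseteq> M \<and> card A = a}. \<Sum>B\<in>{B. B \<subseteq> M - A \<and> card B = b}. \<Sum>j\<in>A. g {j} (A \<union> B - {j}))
       = of_nat ((a + b - 1) choose (a - 1)) *
         (\<Sum>J\<in>{J. J \<subseteq> M \<and> card J = 1}. \<Sum>C\<in>{C. C \<subseteq> M - J \<and> card C = a + b - 1}. g J C)"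
    (is "?L = ?R")
proof -
  define T1 where "T1 = Sigma (Sigma {A. A \<subseteq> M \<and> card A = a} (\<lambda>A. {B. B \<subseteq> M - A \<and> card B = b}))
                              (\<lambda>(A, B). A)"
  define T2 where "T2 = Sigma (Sigma {J. J \<subseteq> M \<and> card J = 1} (\<lambda>J. {C. C \<subseteq> M - J \<and> card C = a + b - 1}))
                              (\<lambda>(J, C). {D. D \<subseteq> C \<and> card D = a - 1})"
  have fin: "finite {A. A \<subseteq> X \<and> P A}" if "X \<subseteq> M" for X P
    using that M by (intro finite_subsets_with) (rule finite_subset)
  have L: "?L = (\<Sum>((A, B), j)\<in>T1. g {j} (A \<union> B - {j}))"
    unfolding T1_def using M by (intro sum_Sigma_Sigma) (auto intro: finite_subset fin)
  have "?R = (\<Sum>J\<in>{J. J \<subseteq> M \<and> card J = 1}. \<Sum>C\<in>{C. C \<subseteq> M - J \<and> card C = a + b - 1}.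
               \<Sum>D\<in>{D. D \<subseteq> C \<and> card D = a - 1}. g J C)"
    unfolding sum_distrib_left
  proof (intro sum.cong refl)
    fix J C assume "C \<in> {C. C \<subseteq> M - J \<and> card C = a + b - 1}"
    then have "finite C" "card C = a + b - 1"
      using M by (auto intro: finite_subset)
    then show "of_nat ((a + b - 1) choose (a - 1)) * g J C = (\<Sum>D\<in>{D. D \<subseteq> C \<and> card D = a - 1}. g J C)"
      by (simp add: n_subsets)
  qed
  also have "\<dots> = (\<Sum>((J, C), D)\<in>T2. g J C)"
    unfolding T2_def using M by (intro sum_Sigma_Sigma) (auto intro: fin)
  also have "\<dots> = (\<Sum>((A, B), j)\<in>T1. g {j} (A \<union> B - {j}))"
  proof (rule sum.reindex_bij_witness[where j = "\<lambda>((J, C), D). ((insert (the_elem J) D, C - D), the_elem J)"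
        and i = "\<lambda>((A, B), j). (({j}, A \<union> B - {j}), A - {j})"])
    fix t assume "t \<in> T2"
    then obtain J C D where t: "t = ((J, C), D)" and J: "J \<subseteq> M" "card J = 1"
      and C: "C \<subseteq> M - J" "card C = a + b - 1" and D: "D \<subseteq> C" "card D = a - 1"
      unfolding T2_def by auto
    obtain x where x: "J = {x}" using J(2) by (rule card_1_singletonE)
    have "finite D" using D C M by (meson finite_Diff finite_subset)
    moreover have "x \<notin> D" "insert x D \<union> (C - D) - {x} = C" using x C D by auto
    ultimately show "(\<lambda>((A, B), j). (({j}, A \<union> B - {j}), A - {j}))
                       ((\<lambda>((J, C), D). ((insert (the_elem J) D, C - D), the_elem J)) t) = t"
      and "(\<lambda>((J, C), D). ((insert (the_elem J) D, C - D), the_elem J)) t \<in> T1"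
      and "(\<lambda>((A, B), j). g {j} (A \<union> B - {j})) ((\<lambda>((J, C), D). ((insert (the_elem J) D, C - D), the_elem J)) t)
           = (\<lambda>((J, C), D). g J C) t"
      using t x J C D a unfolding T1_def by (auto simp: card_Diff_subset)
  next
    fix t assume "t \<in> T1"
    then obtain A B x where t: "t = ((A, B), x)" and A: "A \<subseteq> M" "card A = a"
      and B: "B \<subseteq> M - A" "card B = b" and x: "x \<in> A"
      unfolding T1_def by auto
    have "finite A" "finite B" "A \<inter> B = {}" using A B M by (auto intro: finite_subset)
    then have "card (A \<union> B - {x}) = a + b - 1"
      using A B x by (simp add: card_Un_disjoint)
    then show "(\<lambda>((A, B), j). (({j}, A \<union> B - {j}), A - {j})) t \<in> T2"
      and "(\<lambda>((J, C), D). ((insert (the_elem J) D, C - D), the_elem J))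
             ((\<lambda>((A, B), j). (({j}, A \<union> B - {j}), A - {j})) t) = t"
      using t A B x unfolding T2_def by (auto simp: insert_absorb)
  qed
  finally show ?thesis using L by simp
qed

lemma choose_mult_pick_element:
  fixes m a b :: nat
  assumes "1 \<le> a" "a + b \<le> m"
  shows "((a + b - 1) choose (a - 1)) * ((m choose 1) * ((m - 1) choose (a + b - 1)))
       = a * ((m choose a) * ((m - a) choose b))"
proof -
  obtain a' where a': "a = Suc a'" using assms(1) by (cases a) auto
  obtain m' where m': "m = Suc m'" using assms by (cases m) auto
  have "a * ((m choose a) * ((m - a) choose b)) = (m choose (a + b)) * (a * ((a + b) choose a))"
    using choose_mult[of a "a + b" m] assms by (simp add: ac_simps)
  also have "a * ((a + b) choose a) = (a + b) * ((a + b - 1) choose (a - 1))"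
    using Suc_times_binomial[of a' "a' + b"] a' by simp
  also have "(m choose (a + b)) * ((a + b) * ((a + b - 1) choose (a - 1)))
           = ((a + b - 1) choose (a - 1)) * ((a + b) * (m choose (a + b)))"
    by (simp add: ac_simps)
  also have "(a + b) * (m choose (a + b)) = m * ((m - 1) choose (a + b - 1))"
    using Suc_times_binomial[of "a' + b" m'] a' m' by simp
  finally show ?thesis by simp
qed

lemma ennreal_divide_le_mult_divide:
  fixes X Y :: ennreal and k n a n' :: nat
  assumes "X \<le> of_nat k * Y" "k * n' = a * n" "n > 0" "n' > 0"
  shows "X / of_nat n \<le> of_nat a * (Y / of_nat n')"
proof -
  have "real k / real n = real a / real n'"
    using assms(2-4) by (simp add: field_simps flip: of_nat_mult)
  then have "of_nat k / of_nat n = (of_nat a / of_nat n' :: ennreal)"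
    using assms(3,4) by (simp add: ennreal_of_nat_eq_real_of_nat divide_ennreal)
  have "X / of_nat n \<le> of_nat k * Y / of_nat n"
    by (rule divide_right_mono_ennreal[OF assms(1)])
  also have "\<dots> = of_nat k / of_nat n * Y"
    by (simp add: ennreal_times_divide ac_simps)
  also have "\<dots> = of_nat a * (Y / of_nat n')"
    using \<open>of_nat k / of_nat n = (of_nat a / of_nat n' :: ennreal)\<close> by (simp add: ennreal_times_divide ac_simps)
  finally show ?thesis .
qed

theorem mainTheorem10:
  fixes S :: "(nat \<Rightarrow> 'x::countable) pmf" and m a b :: nat
  assumes "1 \<le> a" and "a + b \<le> m"
  shows "I_S S m a b \<le> of_nat a * I_S S m 1 (a + b - 1)"
proof -
  have "(\<Sum>A\<in>{A. A \<subseteq> {1..m} \<and> card A = a}. \<Sum>B\<in>{B. B \<subseteq> {1..m} - A \<and> card B = b}. MI_sub S A B)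
      \<le> (\<Sum>A\<in>{A. A \<subseteq> {1..m} \<and> card A = a}. \<Sum>B\<in>{B. B \<subseteq> {1..m} - A \<and> card B = b}.
           \<Sum>j\<in>A. MI_sub S {j} (A \<union> B - {j}))"
    by (intro sum_mono MI_sub_le_sum_singletons) (auto intro: finite_subset)
  also have "\<dots> = of_nat ((a + b - 1) choose (a - 1)) *
      (\<Sum>J\<in>{J. J \<subseteq> {1..m} \<and> card J = 1}. \<Sum>C\<in>{C. C \<subseteq> {1..m} - J \<and> card C = a + b - 1}. MI_sub S J C)"
    using assms(1) by (intro sum_subsets_pick_element) simp_all
  finally show ?thesis
    unfolding I_S_def using assms
    by (intro ennreal_divide_le_mult_divide[OF _ choose_mult_pick_element[OF assms]]) simp_all
qed

end
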